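(* Let $\mathfrak{h}$ be a separable complex Hilbert space, $C$ a self-adjoint positive operator in $\mathfrak{h}$, and $(G(t))_{t\ge0}$, $(L_\ell(t))_{t\ge0}$ ($\ell\in\mathbb{N}$) linear operators in $\mathfrak{h}$ with $\mathcal{D}(C)\subset\mathcal{D}(G(t))\cap\mathcal{D}(L_\ell(t))$, such that: (H2.1) $\|G(t)x\|^2\le K(t)\|x\|_C^2$ for all $t\ge0$, $x\in\mathcal{D}(C)$, with $K$ non-decreasing non-negative; (H2.2) for each $\ell$ there is a non-decreasing function $K_\ell$ with $\|L_\ell(t)x\|^2\le K_\ell(t)\|x\|_C^2$ for all $x\in\mathcal{D}(C)$, $t\ge0$; (H2.3) there exist a non-decreasing non-negative function $\alpha$ and a core $\mathfrak{D}_1$ of $C^2$ with $2\Re\langle C^2x,G(t)x\rangle+\sum_{\ell=1}^\infty\|CL_\ell(t)x\|^2\le\alpha(t)\|x\|_C^2$ for all $t\ge0$, $x\in\mathfrak{D}_1$. Then for every $x\in\mathcal{D}(C^2)$ and $t\ge0$: $L_\ell(t)x\in\mathcal{D}(C)$ for all $\ell\in\mathbb{N}$, and $2\Re\langle C^2x,G(t)x\rangle+\sum_{\ell=1}^\infty\|CL_\ell(t)x\|^2\le\alpha(t)\|x\|_C^2$.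
   Context: $\|x\|_C^2=\|x\|^2+\|Cx\|^2$ for $x\in\mathcal{D}(C)$. *)

theory Defs
  imports "HOL-Analysis.Analysis"
begin

text \<open>A complex Hilbert space, presented as a real Hilbert space (real_inner, complete)
  together with a complex scalar multiplication compatible with the real structure.
  The real inner product is the real part of the complex inner product.\<close>

class complex_hilbert = real_inner + complete_space +
  fixes scaleC :: "complex \<Rightarrow> 'a \<Rightarrow> 'a"
  assumes scaleC_add_right: "scaleC a (x + y) = scaleC a x + scaleC a y"
    and scaleC_add_left: "scaleC (a + b) x = scaleC a x + scaleC b x"
    and scaleC_scaleC: "scaleC a (scaleC b x) = scaleC (a * b) x"
    and scaleC_one: "scaleC 1 x = x"
    and scaleC_of_real: "scaleC (complex_of_real r) x = scaleR r x"
    and inner_scaleC_ii: "inner (scaleC \<i> x) (scaleC \<i> y) = inner x y"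

text \<open>Complex inner product, antilinear in the first, linear in the second argument.\<close>
definition cinner :: "'a::complex_hilbert \<Rightarrow> 'a \<Rightarrow> complex" where
  "cinner x y = Complex (inner x y) (- inner x (scaleC \<i> y))"

definition csubspace :: "'a::complex_hilbert set \<Rightarrow> bool" where
  "csubspace S \<longleftrightarrow> 0 \<in> S \<and> (\<forall>x\<in>S. \<forall>y\<in>S. x + y \<in> S) \<and> (\<forall>c. \<forall>x\<in>S. scaleC c x \<in> S)"

text \<open>A (possibly unbounded) linear operator with domain D, represented by a function f
  whose values outside D are irrelevant.\<close>
definition clinear_op :: "'a::complex_hilbert set \<Rightarrow> ('a \<Rightarrow> 'a) \<Rightarrow> bool" where
  "clinear_op D f \<longleftrightarrow> csubspace D \<and> (\<forall>x\<in>D. \<forall>y\<in>D. f (x + y) = f x + f y)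
     \<and> (\<forall>c. \<forall>x\<in>D. f (scaleC c x) = scaleC c (f x))"

text \<open>Self-adjoint: densely defined, domain of the adjoint equals D, and the adjoint agrees with f.\<close>
definition self_adjoint_op :: "'a::complex_hilbert set \<Rightarrow> ('a \<Rightarrow> 'a) \<Rightarrow> bool" where
  "self_adjoint_op D f \<longleftrightarrow> clinear_op D f \<and> closure D = UNIV
     \<and> (\<forall>y. (\<exists>z. \<forall>x\<in>D. cinner (f x) y = cinner x z) \<longleftrightarrow> y \<in> D)
     \<and> (\<forall>x\<in>D. \<forall>y\<in>D. cinner (f x) y = cinner x (f y))"

definition positive_op :: "'a::complex_hilbert set \<Rightarrow> ('a \<Rightarrow> 'a) \<Rightarrow> bool" where
  "positive_op D f \<longleftrightarrow> (\<forall>x\<in>D. 0 \<le> Re (cinner x (f x)))"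

definition dom_sq :: "'a set \<Rightarrow> ('a \<Rightarrow> 'a) \<Rightarrow> 'a set" where
  "dom_sq D f = {x \<in> D. f x \<in> D}"

definition is_core_sq :: "'a::complex_hilbert set \<Rightarrow> ('a \<Rightarrow> 'a) \<Rightarrow> 'a set \<Rightarrow> bool" where
  "is_core_sq D f D1 \<longleftrightarrow> csubspace D1 \<and> D1 \<subseteq> dom_sq D f \<and>
     (\<forall>x\<in>dom_sq D f. \<exists>s. (\<forall>n. s n \<in> D1) \<and> s \<longlonglongrightarrow> x \<and> (\<lambda>n. f (f (s n))) \<longlonglongrightarrow> f (f x))"

definition graph_norm_sq :: "('a::real_normed_vector \<Rightarrow> 'a) \<Rightarrow> 'a \<Rightarrow> real" where
  "graph_norm_sq f x = (norm x)\<^sup>2 + (norm (f x))\<^sup>2"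

end

theory Submission
  imports Defs
begin

text \<open>Approximate \<open>x \<in> \<D>(C\<^sup>2)\<close> by a sequence \<open>s\<^sub>n\<close> in the core \<open>\<D>\<^sub>1\<close> converging in the
  graph norm of \<open>C\<^sup>2\<close>. Since \<open>\<parallel>C y\<parallel>\<^sup>2 = \<langle>y, C\<^sup>2 y\<rangle>\<close>, also \<open>C s\<^sub>n \<rightarrow> C x\<close>, and the relative bounds
  (H2.1), (H2.2) give \<open>G s\<^sub>n \<rightarrow> G x\<close> and \<open>L\<^sub>l s\<^sub>n \<rightarrow> L\<^sub>l x\<close>. Applied to the differences
  \<open>s\<^sub>m - s\<^sub>n \<in> \<D>\<^sub>1\<close>, the dissipativity estimate (H2.3) bounds \<open>\<parallel>C L\<^sub>l s\<^sub>m - C L\<^sub>l s\<^sub>n\<parallel>\<^sup>2\<close> by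
  terms tending to zero, so \<open>C L\<^sub>l s\<^sub>n\<close> is Cauchy, and closedness of the self-adjoint \<open>C\<close>
  yields \<open>L\<^sub>l x \<in> \<D>(C)\<close> with \<open>C L\<^sub>l s\<^sub>n \<rightarrow> C L\<^sub>l x\<close>. Every partial sum of the series then
  passes to the limit.\<close>

lemma bounded_linear_scaleC_ii: "bounded_linear (scaleC \<i> :: 'a::complex_hilbert \<Rightarrow> 'a)"
proof
  fix x y :: 'a and r :: real
  show "scaleC \<i> (x + y) = scaleC \<i> x + scaleC \<i> y" by (rule scaleC_add_right)
  have "scaleC \<i> (r *\<^sub>R x) = scaleC (\<i> * complex_of_real r) x"
    by (simp flip: scaleC_of_real add: scaleC_scaleC)
  also have "\<dots> = r *\<^sub>R scaleC \<i> x"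
    by (simp flip: scaleC_of_real add: scaleC_scaleC mult.commute)
  finally show "scaleC \<i> (r *\<^sub>R x) = r *\<^sub>R scaleC \<i> x" .
  show "\<exists>K. \<forall>x::'a. norm (scaleC \<i> x) \<le> norm x * K"
    by (rule exI[of _ 1]) (simp add: norm_eq_sqrt_inner inner_scaleC_ii)
qed

lemma tendsto_cinner [tendsto_intros]:
  assumes "(f \<longlongrightarrow> a) F" and "(g \<longlongrightarrow> b) F"
  shows "((\<lambda>n. cinner (f n) (g n)) \<longlongrightarrow> cinner a b) F"
  unfolding cinner_def
  by (intro tendsto_intros assms bounded_linear.tendsto[OF bounded_linear_scaleC_ii])

lemma Re_cinner [simp]: "Re (cinner x y) = inner x y"
  by (simp add: cinner_def)

lemma csubspace_diff:
  assumes "csubspace S" and "x \<in> S" and "y \<in> S"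
  shows "x - y \<in> S"
  using assms scaleC_of_real[of "-1" y] unfolding csubspace_def
  by (metis diff_conv_add_uminus scaleR_minus1_left of_real_minus of_real_1)

lemma clinear_op_diff:
  assumes lin: "clinear_op D f" and x: "x \<in> D" and y: "y \<in> D"
  shows "x - y \<in> D" and "f (x - y) = f x - f y"
proof -
  have sub: "csubspace D"
    and add: "\<And>u v. u \<in> D \<Longrightarrow> v \<in> D \<Longrightarrow> f (u + v) = f u + f v"
    and scale: "\<And>c u. u \<in> D \<Longrightarrow> f (scaleC c u) = scaleC c (f u)"
    using lin unfolding clinear_op_def by blast+
  show "x - y \<in> D"
    by (rule csubspace_diff[OF sub x y])
  have neg: "scaleC (-1) z = - z" for z :: 'a
    using scaleC_of_real[of "-1" z] by simp
  have "- y \<in> D"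
    using csubspace_diff[OF sub _ y] sub unfolding csubspace_def by force
  from add[OF x this] have "f (x - y) = f x + f (- y)"
    by simp
  also have "f (- y) = - f y"
    using scale[OF y, of "-1"] by (simp add: neg)
  finally show "f (x - y) = f x - f y"
    by simp
qed

lemma orthogonal_dense_eq_0:
  assumes "closure D = UNIV" and "\<And>w. w \<in> D \<Longrightarrow> inner w y = 0"
  shows "y = 0"
proof -
  have "closed {w. inner w y = 0}"
    by (intro closed_Collect_eq continuous_intros)
  then have "closure D \<subseteq> {w. inner w y = 0}"
    using assms(2) by (intro closure_minimal) auto
  then show ?thesis
    using assms(1) inner_eq_zero_iff by blast
qed

lemma self_adjoint_op_closed:
  assumes sa: "self_adjoint_op D C" and u: "\<And>n. u n \<in> D"
    and "u \<longlonglongrightarrow> v" and "(\<lambda>n. C (u n)) \<longlonglongrightarrow> z"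
  shows "v \<in> D" and "C v = z"
proof -
  have sym: "\<And>a b. a \<in> D \<Longrightarrow> b \<in> D \<Longrightarrow> cinner (C a) b = cinner a (C b)"
    and adjoint_dom: "\<And>y. (\<exists>z. \<forall>x\<in>D. cinner (C x) y = cinner x z) \<longleftrightarrow> y \<in> D"
    and dense: "closure D = UNIV"
    using sa unfolding self_adjoint_op_def by blast+
  have adjoint: "cinner (C w) v = cinner w z" if w: "w \<in> D" for w
  proof (rule LIMSEQ_unique)
    show "(\<lambda>n. cinner (C w) (u n)) \<longlonglongrightarrow> cinner (C w) v"
      by (intro tendsto_intros assms)
    show "(\<lambda>n. cinner (C w) (u n)) \<longlonglongrightarrow> cinner w z"
      unfolding sym[OF w u] by (intro tendsto_intros assms)
  qed
  then show v: "v \<in> D"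
    using adjoint_dom by blast
  have "inner w (z - C v) = 0" if w: "w \<in> D" for w
    using arg_cong[OF adjoint[OF w], of Re] sym[OF w v] by (simp add: inner_diff_right)
  from orthogonal_dense_eq_0[OF dense this] show "C v = z"
    by simp
qed

lemma self_adjoint_op_norm_power2:
  assumes "self_adjoint_op D C" and "x \<in> dom_sq D C"
  shows "(norm (C x))\<^sup>2 = inner x (C (C x))"
proof -
  have "cinner (C (C x)) x = cinner (C x) (C x)"
    using assms unfolding self_adjoint_op_def dom_sq_def by blast
  from arg_cong[OF this, of Re] show ?thesis
    by (simp add: power2_norm_eq_inner inner_commute)
qed

lemma tendsto_zero_if_norm_power2_le:
  fixes f :: "'b \<Rightarrow> 'a::real_normed_vector"
  assumes "\<forall>\<^sub>F n in F. (norm (f n))\<^sup>2 \<le> g n" and "(g \<longlongrightarrow> 0) F"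
  shows "(f \<longlongrightarrow> 0) F"
proof -
  have "((\<lambda>n. (norm (f n))\<^sup>2) \<longlongrightarrow> 0) F"
    by (rule tendsto_sandwich[of "\<lambda>_. 0" _ _ g]) (simp_all add: assms)
  from tendsto_real_sqrt[OF this] show ?thesis
    by (simp add: tendsto_norm_zero_iff)
qed

lemma Cauchy_if_diff_tendsto_0:
  fixes X :: "nat \<Rightarrow> 'a::real_normed_vector"
  assumes "((\<lambda>p. X (fst p) - X (snd p)) \<longlongrightarrow> 0) (sequentially \<times>\<^sub>F sequentially)"
  shows "Cauchy X"
proof (rule CauchyI)
  fix e :: real assume "0 < e"
  with assms have "\<forall>\<^sub>F p in sequentially \<times>\<^sub>F sequentially. norm (X (fst p) - X (snd p)) < e"
    by (auto simp: tendsto_iff dist_norm)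
  then show "\<exists>M. \<forall>m\<ge>M. \<forall>n\<ge>M. norm (X m - X n) < e"
    unfolding eventually_prod_sequentially by auto
qed

lemma tendsto_diff_fst_snd:
  fixes f :: "nat \<Rightarrow> 'a::real_normed_vector"
  assumes "f \<longlonglongrightarrow> c"
  shows "((\<lambda>p. f (fst p) - f (snd p)) \<longlongrightarrow> 0) (sequentially \<times>\<^sub>F sequentially)"
proof -
  have "((\<lambda>p. f (fst p)) \<longlongrightarrow> c) (sequentially \<times>\<^sub>F sequentially)"
    and "((\<lambda>p::nat \<times> nat. f (snd p)) \<longlongrightarrow> c) (sequentially \<times>\<^sub>F sequentially)"
    by (rule filterlim_compose[OF assms filterlim_fst] filterlim_compose[OF assms filterlim_snd])+
  from tendsto_diff[OF this] show ?thesis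
    by simp
qed

lemma self_adjoint_op_tendsto:
  assumes sa: "self_adjoint_op D C" and s: "\<And>n. s n \<in> dom_sq D C" and x: "x \<in> dom_sq D C"
    and "s \<longlonglongrightarrow> x" and "(\<lambda>n. C (C (s n))) \<longlonglongrightarrow> C (C x)"
  shows "(\<lambda>n. C (s n)) \<longlonglongrightarrow> C x"
proof -
  have lin: "clinear_op D C"
    using sa unfolding self_adjoint_op_def by blast
  have diff: "s n - x \<in> dom_sq D C" "C (s n - x) = C (s n) - C x"
    "C (C (s n) - C x) = C (C (s n)) - C (C x)" for n
    using s[of n] x clinear_op_diff[OF lin] unfolding dom_sq_def by auto
  have bound: "(norm (C (s n) - C x))\<^sup>2 \<le> norm (s n - x) * norm (C (C (s n)) - C (C x))" for n
    using self_adjoint_op_norm_power2[OF sa diff(1)] norm_cauchy_schwarz[of "s n - x"]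
    unfolding diff by simp
  have "(\<lambda>n. norm (s n - x) * norm (C (C (s n)) - C (C x))) \<longlonglongrightarrow> 0"
    using tendsto_mult[OF assms(4,5)[THEN LIM_zero, THEN tendsto_norm_zero]] by simp
  from tendsto_zero_if_norm_power2_le[OF always_eventually[OF allI[OF bound]] this]
  show ?thesis by (rule LIM_zero_cancel)
qed

lemma relatively_bounded_tendsto:
  assumes C: "clinear_op D C" and T: "clinear_op DT T" and "D \<subseteq> DT"
    and bound: "\<And>y. y \<in> D \<Longrightarrow> (norm (T y))\<^sup>2 \<le> k * graph_norm_sq C y"
    and s: "\<And>n. s n \<in> D" and x: "x \<in> D"
    and "s \<longlonglongrightarrow> x" and "(\<lambda>n. C (s n)) \<longlonglongrightarrow> C x"
  shows "(\<lambda>n. T (s n)) \<longlonglongrightarrow> T x"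
proof -
  have "s n - x \<in> D" "C (s n - x) = C (s n) - C x" "T (s n - x) = T (s n) - T x" for n
    using clinear_op_diff[OF C s x] clinear_op_diff[OF T] s x assms(3) by blast+
  then have bound_diff: "(norm (T (s n) - T x))\<^sup>2 \<le> k * ((norm (s n - x))\<^sup>2 + (norm (C (s n) - C x))\<^sup>2)" for n
    using bound[of "s n - x"] unfolding graph_norm_sq_def by simp
  have sq_lim: "(\<lambda>n. (norm (f n - c))\<^sup>2) \<longlonglongrightarrow> 0" if "f \<longlonglongrightarrow> c" for f :: "nat \<Rightarrow> 'a" and c
    using tendsto_power[OF tendsto_norm_zero[OF LIM_zero[OF that]], of 2] by simp
  have "(\<lambda>n. k * ((norm (s n - x))\<^sup>2 + (norm (C (s n) - C x))\<^sup>2)) \<longlonglongrightarrow> 0"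
    by (intro tendsto_mult_right_zero tendsto_add_zero sq_lim assms(7,8))
  from tendsto_zero_if_norm_power2_le[OF always_eventually[OF allI[OF bound_diff]] this]
  show ?thesis by (rule LIM_zero_cancel)
qed

text \<open>The hypotheses (H2.1)--(H2.3) at one fixed time \<open>t\<close>, with \<open>k = K t\<close>, \<open>kL l = K\<^sub>l t\<close>
  and \<open>a = \<alpha> t\<close>.\<close>

locale dissipative_on_core =
  fixes DC :: "'a::complex_hilbert set" and C :: "'a \<Rightarrow> 'a"
    and DG :: "'a set" and G :: "'a \<Rightarrow> 'a"
    and DL :: "nat \<Rightarrow> 'a set" and L :: "nat \<Rightarrow> 'a \<Rightarrow> 'a"
    and D1 :: "'a set" and k a :: real and kL :: "nat \<Rightarrow> real"
  assumes C_sa: "self_adjoint_op DC C"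
    and G_lin: "clinear_op DG G" and G_dom: "DC \<subseteq> DG"
    and G_bound: "\<And>x. x \<in> DC \<Longrightarrow> (norm (G x))\<^sup>2 \<le> k * graph_norm_sq C x"
    and L_lin: "\<And>l. clinear_op (DL l) (L l)" and L_dom: "\<And>l. DC \<subseteq> DL l"
    and L_bound: "\<And>l x. x \<in> DC \<Longrightarrow> (norm (L l x))\<^sup>2 \<le> kL l * graph_norm_sq C x"
    and core: "is_core_sq DC C D1"
    and dissipative: "\<And>x. x \<in> D1 \<Longrightarrow>
        (\<forall>l. L l x \<in> DC) \<and> summable (\<lambda>l. (norm (C (L l x)))\<^sup>2) \<and>
        2 * Re (cinner (C (C x)) (G x)) + (\<Sum>l. (norm (C (L l x)))\<^sup>2) \<le> a * graph_norm_sq C x"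
begin

lemma C_lin: "clinear_op DC C"
  using C_sa unfolding self_adjoint_op_def by blast

lemma core_subset: "D1 \<subseteq> dom_sq DC C"
  using core unfolding is_core_sq_def by blast

definition core_approximating :: "(nat \<Rightarrow> 'a) \<Rightarrow> 'a \<Rightarrow> bool" where
  "core_approximating s x \<longleftrightarrow> (\<forall>n. s n \<in> D1) \<and> s \<longlonglongrightarrow> x \<and> (\<lambda>n. C (s n)) \<longlonglongrightarrow> C x
     \<and> (\<lambda>n. C (C (s n))) \<longlonglongrightarrow> C (C x) \<and> (\<lambda>n. G (s n)) \<longlonglongrightarrow> G x
     \<and> (\<forall>l. (\<lambda>n. L l (s n)) \<longlonglongrightarrow> L l x)"

lemma core_approximating_exists:
  assumes x: "x \<in> dom_sq DC C"
  obtains s where "core_approximating s x"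
proof -
  obtain s where s: "\<And>n. s n \<in> D1" "s \<longlonglongrightarrow> x" "(\<lambda>n. C (C (s n))) \<longlonglongrightarrow> C (C x)"
    using core x unfolding is_core_sq_def by blast
  have s_dom: "s n \<in> dom_sq DC C" for n
    using s(1) core_subset by blast
  then have s_DC: "s n \<in> DC" for n
    unfolding dom_sq_def by blast
  have x_DC: "x \<in> DC"
    using x unfolding dom_sq_def by blast
  have Cs: "(\<lambda>n. C (s n)) \<longlonglongrightarrow> C x"
    by (rule self_adjoint_op_tendsto[OF C_sa s_dom x s(2,3)])
  have "(\<lambda>n. G (s n)) \<longlonglongrightarrow> G x"
    by (rule relatively_bounded_tendsto[OF C_lin G_lin G_dom G_bound s_DC x_DC s(2) Cs])
  moreover have "(\<lambda>n. L l (s n)) \<longlonglongrightarrow> L l x" for l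
    by (rule relatively_bounded_tendsto[OF C_lin L_lin L_dom L_bound s_DC x_DC s(2) Cs])
  ultimately show thesis
    using s Cs
    by (intro that[of s]) (simp add: core_approximating_def)
qed

lemma norm_C_L_power2_le:
  assumes "y \<in> D1"
  shows "(norm (C (L l y)))\<^sup>2 \<le> a * graph_norm_sq C y - 2 * inner (C (C y)) (G y)"
proof -
  from dissipative[OF assms] have "summable (\<lambda>l. (norm (C (L l y)))\<^sup>2)"
    and "2 * inner (C (C y)) (G y) + (\<Sum>l. (norm (C (L l y)))\<^sup>2) \<le> a * graph_norm_sq C y"
    by auto
  with sum_le_suminf[of _ "{l}"] show ?thesis by fastforce
qed

lemma core_approximating_Cauchy_C_L:
  assumes "core_approximating s x"
  shows "Cauchy (\<lambda>n. C (L l (s n)))"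
proof (rule Cauchy_if_diff_tendsto_0)
  let ?F = "sequentially \<times>\<^sub>F sequentially"
  have D1: "s n \<in> D1" for n
    using assms unfolding core_approximating_def by blast
  then have dom: "s n \<in> DC" "C (s n) \<in> DC" for n
    using core_subset unfolding dom_sq_def by blast+
  have LD: "L l (s n) \<in> DC" for n
    using dissipative[OF D1] by blast
  have D1_diff: "s m - s n \<in> D1" for m n
    using csubspace_diff core D1 unfolding is_core_sq_def by blast
  have diff: "C (s m - s n) = C (s m) - C (s n)"
    "C (C (s m) - C (s n)) = C (C (s m)) - C (C (s n))"
    "G (s m - s n) = G (s m) - G (s n)"
    "C (L l (s m - s n)) = C (L l (s m)) - C (L l (s n))" for m n
  proof -
    show "C (s m - s n) = C (s m) - C (s n)" "C (C (s m) - C (s n)) = C (C (s m)) - C (C (s n))"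
      using clinear_op_diff(2)[OF C_lin] dom by blast+
    show "G (s m - s n) = G (s m) - G (s n)"
      using clinear_op_diff(2)[OF G_lin] dom G_dom by blast
    have "L l (s m - s n) = L l (s m) - L l (s n)"
      using clinear_op_diff(2)[OF L_lin] dom L_dom by blast
    then show "C (L l (s m - s n)) = C (L l (s m)) - C (L l (s n))"
      using clinear_op_diff(2)[OF C_lin LD LD] by simp
  qed
  have bound: "(norm (C (L l (s (fst p))) - C (L l (s (snd p)))))\<^sup>2
      \<le> a * ((norm (s (fst p) - s (snd p)))\<^sup>2 + (norm (C (s (fst p)) - C (s (snd p))))\<^sup>2)
        - 2 * inner (C (C (s (fst p))) - C (C (s (snd p)))) (G (s (fst p)) - G (s (snd p)))"
      (is "_ \<le> ?g p") for p
    using norm_C_L_power2_le[OF D1_diff, of l "fst p" "snd p"] unfolding graph_norm_sq_def diff .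
  have "s \<longlonglongrightarrow> x" "(\<lambda>n. C (s n)) \<longlonglongrightarrow> C x" "(\<lambda>n. C (C (s n))) \<longlonglongrightarrow> C (C x)"
    "(\<lambda>n. G (s n)) \<longlonglongrightarrow> G x"
    using assms unfolding core_approximating_def by blast+
  then have "(?g \<longlongrightarrow> a * ((norm (0::'a))\<^sup>2 + (norm (0::'a))\<^sup>2) - 2 * inner (0::'a) 0) ?F"
    by (intro tendsto_intros tendsto_diff_fst_snd)
  then have lim: "(?g \<longlongrightarrow> 0) ?F"
    by simp
  show "((\<lambda>p. C (L l (s (fst p))) - C (L l (s (snd p)))) \<longlongrightarrow> 0) ?F"
    by (rule tendsto_zero_if_norm_power2_le[OF always_eventually[OF allI[OF bound]] lim])
qed

lemma core_approximating_limit_L: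
  assumes "core_approximating s x"
  shows "L l x \<in> DC" and "(\<lambda>n. C (L l (s n))) \<longlonglongrightarrow> C (L l x)"
proof -
  obtain z where z: "(\<lambda>n. C (L l (s n))) \<longlonglongrightarrow> z"
    using core_approximating_Cauchy_C_L[OF assms] Cauchy_convergent convergent_def by blast
  have "L l (s n) \<in> DC" for n
    using assms dissipative unfolding core_approximating_def by blast
  moreover have "(\<lambda>n. L l (s n)) \<longlonglongrightarrow> L l x"
    using assms unfolding core_approximating_def by blast
  ultimately have "L l x \<in> DC" "C (L l x) = z"
    using self_adjoint_op_closed[OF C_sa _ _ z] by blast+
  with z show "L l x \<in> DC" "(\<lambda>n. C (L l (s n))) \<longlonglongrightarrow> C (L l x)"
    by simp_all
qed

theorem dissipative_dom_sq:
  assumes "x \<in> dom_sq DC C"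
  shows "(\<forall>l. L l x \<in> DC) \<and> summable (\<lambda>l. (norm (C (L l x)))\<^sup>2) \<and>
    2 * Re (cinner (C (C x)) (G x)) + (\<Sum>l. (norm (C (L l x)))\<^sup>2) \<le> a * graph_norm_sq C x"
proof -
  obtain s where s: "core_approximating s x"
    using core_approximating_exists[OF assms] .
  define R where "R y = a * graph_norm_sq C y - 2 * inner (C (C y)) (G y)" for y
  have "(\<Sum>l<N. (norm (C (L l (s n))))\<^sup>2) \<le> R (s n)" for N n
  proof -
    from s dissipative have "summable (\<lambda>l. (norm (C (L l (s n))))\<^sup>2)"
      and "2 * inner (C (C (s n))) (G (s n)) + (\<Sum>l. (norm (C (L l (s n))))\<^sup>2) \<le> a * graph_norm_sq C (s n)"
      unfolding core_approximating_def by auto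
    with sum_le_suminf[of _ "{..<N}"] show ?thesis
      unfolding R_def by fastforce
  qed
  moreover have "(\<lambda>n. R (s n)) \<longlonglongrightarrow> R x"
    using s unfolding R_def graph_norm_sq_def core_approximating_def
    by (intro tendsto_intros) blast+
  moreover have "(\<lambda>n. \<Sum>l<N. (norm (C (L l (s n))))\<^sup>2) \<longlonglongrightarrow> (\<Sum>l<N. (norm (C (L l x)))\<^sup>2)" for N
    by (intro tendsto_intros core_approximating_limit_L(2)[OF s])
  ultimately have partial: "(\<Sum>l<N. (norm (C (L l x)))\<^sup>2) \<le> R x" for N
    by (meson LIMSEQ_le always_eventually)
  then have "summable (\<lambda>l. (norm (C (L l x)))\<^sup>2)"
    by (intro summableI_nonneg_bounded) auto
  with partial suminf_le_const show ?thesis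
    using core_approximating_limit_L(1)[OF s] unfolding R_def by fastforce
qed

end

theorem lemma5p3:
  fixes DC :: "'a::complex_hilbert set" and C :: "'a \<Rightarrow> 'a"
    and DG :: "real \<Rightarrow> 'a set" and G :: "real \<Rightarrow> 'a \<Rightarrow> 'a"
    and DL :: "nat \<Rightarrow> real \<Rightarrow> 'a set" and L :: "nat \<Rightarrow> real \<Rightarrow> 'a \<Rightarrow> 'a"
    and K \<alpha> :: "real \<Rightarrow> real" and KL :: "nat \<Rightarrow> real \<Rightarrow> real"
    and D1 :: "'a set"
  assumes separable: "\<exists>B::'a set. countable B \<and> closure B = UNIV"
    and C_sa: "self_adjoint_op DC C" and C_pos: "positive_op DC C"
    and G_lin: "\<And>t. t \<ge> 0 \<Longrightarrow> clinear_op (DG t) (G t)"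
    and L_lin: "\<And>l t. t \<ge> 0 \<Longrightarrow> clinear_op (DL l t) (L l t)"
    and dom_incl: "\<And>l t. t \<ge> 0 \<Longrightarrow> DC \<subseteq> DG t \<inter> DL l t"
    and K_mono: "mono_on {0..} K" and K_nonneg: "\<And>t. t \<ge> 0 \<Longrightarrow> K t \<ge> 0"
    and H21: "\<And>t x. t \<ge> 0 \<Longrightarrow> x \<in> DC \<Longrightarrow> (norm (G t x))\<^sup>2 \<le> K t * graph_norm_sq C x"
    and KL_mono: "\<And>l. mono_on {0..} (KL l)"
    and H22: "\<And>l t x. t \<ge> 0 \<Longrightarrow> x \<in> DC \<Longrightarrow> (norm (L l t x))\<^sup>2 \<le> KL l t * graph_norm_sq C x"
    and \<alpha>_mono: "mono_on {0..} \<alpha>" and \<alpha>_nonneg: "\<And>t. t \<ge> 0 \<Longrightarrow> \<alpha> t \<ge> 0"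
    and core: "is_core_sq DC C D1"
    and H23: "\<And>t x. t \<ge> 0 \<Longrightarrow> x \<in> D1 \<Longrightarrow>
        (\<forall>l. L l t x \<in> DC) \<and> summable (\<lambda>l. (norm (C (L l t x)))\<^sup>2) \<and>
        2 * Re (cinner (C (C x)) (G t x)) + (\<Sum>l. (norm (C (L l t x)))\<^sup>2) \<le> \<alpha> t * graph_norm_sq C x"
  shows "\<forall>x\<in>dom_sq DC C. \<forall>t\<ge>0.
        (\<forall>l. L l t x \<in> DC) \<and> summable (\<lambda>l. (norm (C (L l t x)))\<^sup>2) \<and>
        2 * Re (cinner (C (C x)) (G t x)) + (\<Sum>l. (norm (C (L l t x)))\<^sup>2) \<le> \<alpha> t * graph_norm_sq C x"
proof (intro ballI allI impI)
  fix x and t :: real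
  assume x: "x \<in> dom_sq DC C" and t: "t \<ge> 0"
  interpret dissipative_on_core DC C "DG t" "G t" "\<lambda>l. DL l t" "\<lambda>l. L l t" D1 "K t" "\<alpha> t" "\<lambda>l. KL l t"
    using C_sa G_lin L_lin dom_incl H21 H22 core H23 t by unfold_locales auto
  show "(\<forall>l. L l t x \<in> DC) \<and> summable (\<lambda>l. (norm (C (L l t x)))\<^sup>2) \<and>
      2 * Re (cinner (C (C x)) (G t x)) + (\<Sum>l. (norm (C (L l t x)))\<^sup>2) \<le> \<alpha> t * graph_norm_sq C x"
    using dissipative_dom_sq[OF x] by simp
qed

end
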